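(* Let $\mathbb{H}$ be a quasiconcave classical entropy and let $\mathcal{N}$ be a classical channel from $X$ ($|X|=m$) to $Y$ with columns $\mathbf{p}_x=\mathcal{N}(\mathbf{e}_x)$. Then its maximal extension satisfies $\overline{\mathbb{H}}(Y|X)_{\mathcal{N}}=\min_{x\in[m]}\mathbb{H}(\mathbf{p}_x)$.
   Context: A classical entropy is a function $\mathbb{H}$ on $\bigcup_{n}\mathrm{Prob}(n)$ that is Schur-concave ($\mathbf{p}\succ\mathbf{q}\Rightarrow\mathbb{H}(\mathbf{p})\le\mathbb{H}(\mathbf{q})$, vectors of different lengths being compared after padding with zeros) and additive ($\mathbb{H}(\mathbf{p}\otimes\mathbf{q})=\mathbb{H}(\mathbf{p})+\mathbb{H}(\mathbf{q})$). It is quasiconcave if $\mathbb{H}(\sum_i\lambda_i\mathbf{p}_i)\ge\min_i\mathbb{H}(\mathbf{p}_i)$ for convex weights $\lambda_i$. Here $\mathbf{p}\succ\mathbf{q}$ means the sum of the $k$ largest entries of $\mathbf{p}$ is at least that of $\mathbf{q}$ for every $k$. Classical channels are column-stochastic matrices; a probability vector is a classical channel with trivial input. Classical channel majorization (same output): $\mathcal{N}\succ\mathcal{M}$ iff $\mathcal{M}=\mathcal{D}^{YZ\to Y}\circ(\mathcal{N}\otimes\mathrm{id}^Z)\circ\mathcal{S}^{X'\to XZ}$ for a finite classical system $Z$ and classical channels $\mathcal{S},\mathcal{D}$ with $\mathcal{D}(\cdot\otimes\mathbf{e}_z)$ doubly stochastic for all $z$; channels with different output sizes are compared after padding outputs of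 the smaller one with zeros. The maximal extension is $\overline{\mathbb{H}}(Y|X)_{\mathcal{N}}:=\inf\{\mathbb{H}(\mathbf{q}):\ \mathcal{N}\succ\mathbf{q}\}$, the infimum over probability vectors $\mathbf{q}$ of arbitrary finite length. *)

theory Defs
  imports Complex_Main
begin

definition prob_vec :: "real list \<Rightarrow> bool" where
  "prob_vec p \<longleftrightarrow> (\<forall>a\<in>set p. 0 \<le> a) \<and> sum_list p = 1"

definition pad :: "nat \<Rightarrow> real list \<Rightarrow> real list" where
  "pad d p = p @ replicate (d - length p) 0"

definition top_sum :: "nat \<Rightarrow> real list \<Rightarrow> real" where
  "top_sum k p = sum_list (take k (rev (sort p)))"

definition majorizes :: "real list \<Rightarrow> real list \<Rightarrow> bool" where
  "majorizes p q \<longleftrightarrow>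
     (let d = max (length p) (length q) in
       \<forall>k. top_sum k (pad d q) \<le> top_sum k (pad d p))"

definition tensor :: "real list \<Rightarrow> real list \<Rightarrow> real list" where
  "tensor p q = concat (map (\<lambda>a. map (\<lambda>b. a * b) q) p)"

definition schur_concave :: "(real list \<Rightarrow> real) \<Rightarrow> bool" where
  "schur_concave H \<longleftrightarrow>
     (\<forall>p q. prob_vec p \<longrightarrow> prob_vec q \<longrightarrow> majorizes p q \<longrightarrow> H p \<le> H q)"

definition additive :: "(real list \<Rightarrow> real) \<Rightarrow> bool" where
  "additive H \<longleftrightarrow>
     (\<forall>p q. prob_vec p \<longrightarrow> prob_vec q \<longrightarrow> H (tensor p q) = H p + H q)"

definition classical_entropy :: "(real list \<Rightarrow> real) \<Rightarrow> bool" where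
  "classical_entropy H \<longleftrightarrow> schur_concave H \<and> additive H"

definition quasiconcave_entropy :: "(real list \<Rightarrow> real) \<Rightarrow> bool" where
  "quasiconcave_entropy H \<longleftrightarrow>
     (\<forall>(k::nat) (n::nat) (ps :: nat \<Rightarrow> real list) (lam :: nat \<Rightarrow> real).
        0 < k \<longrightarrow> (\<forall>i<k. prob_vec (ps i) \<and> length (ps i) = n \<and> 0 \<le> lam i) \<longrightarrow>
        (\<Sum>i<k. lam i) = 1 \<longrightarrow>
        Min ((\<lambda>i. H (ps i)) ` {..<k}) \<le> H (map (\<lambda>j. \<Sum>i<k. lam i * ps i ! j) [0..<n]))"

text \<open>A classical channel from an m-element input to an n-element output is a
  column-stochastic n\<times>m matrix, represented as N y x (output y < n, input x < m).\<close>
definition channel :: "nat \<Rightarrow> nat \<Rightarrow> (nat \<Rightarrow> nat \<Rightarrow> real) \<Rightarrow> bool" where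
  "channel m n N \<longleftrightarrow>
     (\<forall>x<m. (\<forall>y<n. 0 \<le> N y x) \<and> (\<Sum>y<n. N y x) = 1)"

definition column :: "nat \<Rightarrow> (nat \<Rightarrow> nat \<Rightarrow> real) \<Rightarrow> nat \<Rightarrow> real list" where
  "column n N x = map (\<lambda>y. N y x) [0..<n]"

definition doubly_stochastic :: "nat \<Rightarrow> (nat \<Rightarrow> nat \<Rightarrow> real) \<Rightarrow> bool" where
  "doubly_stochastic d D \<longleftrightarrow>
     (\<forall>i<d. \<forall>j<d. 0 \<le> D i j) \<and> (\<forall>j<d. (\<Sum>i<d. D i j) = 1) \<and> (\<forall>i<d. (\<Sum>j<d. D i j) = 1)"

definition pad_chan :: "nat \<Rightarrow> (nat \<Rightarrow> nat \<Rightarrow> real) \<Rightarrow> nat \<Rightarrow> nat \<Rightarrow> real" where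
  "pad_chan n N y x = (if y < n then N y x else 0)"

text \<open>Channel majorization N \<succ> M for N : [m] \<rightarrow> [n], M : [m'] \<rightarrow> [n'] (outputs padded to
  d = max n n'): M = D \<circ> (N \<otimes> id_Z) \<circ> S with Z = [l] (l \<ge> 1), S : [m'] \<rightarrow> [m]\<times>[l]
  a channel (S x z x'), and D(\<cdot> \<otimes> e_z) = D z doubly stochastic for every z.\<close>
definition chan_majorizes ::
  "nat \<Rightarrow> nat \<Rightarrow> (nat \<Rightarrow> nat \<Rightarrow> real) \<Rightarrow> nat \<Rightarrow> nat \<Rightarrow> (nat \<Rightarrow> nat \<Rightarrow> real) \<Rightarrow> bool" where
  "chan_majorizes m n N m' n' M \<longleftrightarrow>
     (let d = max n n' in
       \<exists>(l::nat) (S :: nat \<Rightarrow> nat \<Rightarrow> nat \<Rightarrow> real) (D :: nat \<Rightarrow> nat \<Rightarrow> nat \<Rightarrow> real).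
         0 < l \<and>
         (\<forall>x'<m'. (\<forall>x<m. \<forall>z<l. 0 \<le> S x z x') \<and> (\<Sum>x<m. \<Sum>z<l. S x z x') = 1) \<and>
         (\<forall>z<l. doubly_stochastic d (D z)) \<and>
         (\<forall>y'<d. \<forall>x'<m'.
            pad_chan n' M y' x' =
            (\<Sum>x<m. \<Sum>z<l. \<Sum>y<d. D z y' y * pad_chan n N y x * S x z x')))"

text \<open>A probability vector q viewed as a channel with trivial (one-element) input.\<close>
definition vec_chan :: "real list \<Rightarrow> nat \<Rightarrow> nat \<Rightarrow> real" where
  "vec_chan q y x = q ! y"

definition max_ext :: "(real list \<Rightarrow> real) \<Rightarrow> nat \<Rightarrow> nat \<Rightarrow> (nat \<Rightarrow> nat \<Rightarrow> real) \<Rightarrow> real" where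
  "max_ext H m n N =
     Inf {H q | q. prob_vec q \<and> chan_majorizes m n N 1 (length q) (vec_chan q)}"

end

theory Submission
  imports Defs "HOL-Combinatorics.List_Permutation"
begin

(* N majorizes each of its columns p_x: let S select the input x and take D to be the identity.
   Hence the infimum is at most min_x H(p_x).  Conversely, if N majorizes q then the zero-padded q
   is the convex mixture of the vectors D_z p_x with weights S(x,z).  A doubly stochastic matrix
   can only flatten a vector (D_z p_x is majorized by p_x), so Schur concavity gives
   H(D_z p_x) \<ge> H(p_x), and quasiconcavity bounds H(q) below by min_x H(p_x). *)

definition apply_matrix :: "nat \<Rightarrow> (nat \<Rightarrow> nat \<Rightarrow> real) \<Rightarrow> real list \<Rightarrow> real list" where
  "apply_matrix d D v = map (\<lambda>i. \<Sum>j<d. D i j * v ! j) [0..<d]"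

lemma sum_list_map_upt_zero: "sum_list (map f [0..<d]) = (\<Sum>i<d. f i)"
  by (simp add: interv_sum_list_conv_sum_set_nat atLeast0LessThan)

lemma sum_lessThan_mult_div_mod:
  fixes g :: "nat \<Rightarrow> nat \<Rightarrow> 'a::comm_monoid_add"
  assumes "0 < l"
  shows "(\<Sum>i<m * l. g (i div l) (i mod l)) = (\<Sum>x<m. \<Sum>z<l. g x z)"
proof -
  have "(\<Sum>i\<in>{x * l..<x * l + l}. g (i div l) (i mod l)) = (\<Sum>z<l. g x z)" for x
    using sum.shift_bounds_nat_ivl[of "\<lambda>i. g (i div l) (i mod l)" 0 "x * l" l] assms
    by (simp add: atLeast0LessThan add.commute)
  then show ?thesis
    by (simp flip: sum.nat_group)
qed

lemma rev_sort_nth_antimono: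
  fixes w :: "'a::linorder list"
  assumes "i \<le> j" "j < length w"
  shows "rev (sort w) ! j \<le> rev (sort w) ! i"
proof -
  have "sorted_wrt (\<ge>) (rev (sort w))" by (simp add: sorted_wrt_rev)
  then show ?thesis
    using assms by (metis le_neq_implies_less length_rev length_sort order_refl sorted_wrt_nth_less)
qed

lemma rev_sort_as_permutation:
  obtains f where "bij_betw f {..<length w} {..<length w}"
    and "\<And>i. i < length w \<Longrightarrow> rev (sort w) ! i = w ! f i"
proof -
  have "mset (rev (sort w)) = mset w" by simp
  from permutation_Ex_bij[OF this] show ?thesis
    using that by auto
qed

lemma top_sum_eq_sum_nth:
  assumes "k \<le> length w"
  shows "top_sum k w = (\<Sum>i<k. rev (sort w) ! i)"
  using assms by (simp add: top_sum_def sum_list_sum_nth atLeast0LessThan min_def)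

lemma top_sum_min_length: "top_sum k w = top_sum (min k (length w)) w"
  by (simp add: top_sum_def min_def)

lemma top_sum_eq_sum_subset:
  obtains I where "I \<subseteq> {..<length w}" "card I = min k (length w)"
    and "top_sum k w = (\<Sum>j\<in>I. w ! j)"
proof -
  let ?d = "length w" and ?k = "min k (length w)"
  obtain f where f: "bij_betw f {..<?d} {..<?d}" "\<And>i. i < ?d \<Longrightarrow> rev (sort w) ! i = w ! f i"
    using rev_sort_as_permutation[of w] by blast
  have inj: "inj_on f {..<?k}"
    using bij_betw_imp_inj_on[OF f(1)] by (rule inj_on_subset) auto
  have "top_sum k w = (\<Sum>i<?k. rev (sort w) ! i)"
    by (subst top_sum_min_length) (simp add: top_sum_eq_sum_nth)
  also have "\<dots> = (\<Sum>j\<in>f ` {..<?k}. w ! j)"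
    using f(2) by (simp add: sum.reindex[OF inj])
  finally have "top_sum k w = (\<Sum>j\<in>f ` {..<?k}. w ! j)" .
  moreover have "f ` {..<?k} \<subseteq> {..<?d}" using bij_betw_imp_surj_on[OF f(1)] by auto
  ultimately show ?thesis using that card_image[OF inj] by simp
qed

text \<open>Weights in [0,1] of total mass k can collect at most the k largest values: compared with
  the indicator of the first k indices, the weights move mass only from values above the
  threshold s (k - 1) to values below it.\<close>
lemma weighted_sum_le_sum_first:
  fixes s b :: "nat \<Rightarrow> real"
  assumes "k \<le> d" and antimono: "\<And>i j. i \<le> j \<Longrightarrow> j < d \<Longrightarrow> s j \<le> s i"
    and b: "\<And>i. i < d \<Longrightarrow> 0 \<le> b i \<and> b i \<le> 1" and b_sum: "(\<Sum>i<d. b i) = real k"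
  shows "(\<Sum>i<d. b i * s i) \<le> (\<Sum>i<k. s i)"
proof (cases "k = 0")
  case True
  then have "\<forall>i<d. b i = 0"
    using b b_sum sum_nonneg_eq_0_iff[of "{..<d}" b] by auto
  then show ?thesis using True by simp
next
  case False
  define t where "t = s (k - 1)"
  define e where "e i = b i - (if i < k then 1 else 0)" for i
  have "{..<d} \<inter> {i. i < k} = {..<k}" using \<open>k \<le> d\<close> by auto
  then have first: "(\<Sum>i<d. if i < k then f i else 0) = (\<Sum>i<k. f i)" for f :: "nat \<Rightarrow> real"
    by (simp add: sum.If_cases)
  have e_sum: "(\<Sum>i<d. e i) = 0"
    using b_sum first[of "\<lambda>_. 1"] by (simp add: e_def sum_subtractf)
  have "e i * (s i - t) \<le> 0" if "i < d" for i
  proof (cases "i < k")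
    case True
    then show ?thesis
      using antimono[of i "k - 1"] b[OF that] \<open>k \<le> d\<close> by (simp add: e_def t_def mult_nonpos_nonneg)
  next
    case False
    then show ?thesis
      using antimono[of "k - 1" i] b[OF that] that by (simp add: e_def t_def mult_nonneg_nonpos)
  qed
  then have "(\<Sum>i<d. e i * (s i - t)) \<le> 0" by (intro sum_nonpos) simp
  then have "(\<Sum>i<d. e i * s i) \<le> 0"
    using e_sum by (simp add: right_diff_distrib sum_subtractf flip: sum_distrib_right)
  moreover have "(\<Sum>i<d. e i * s i) = (\<Sum>i<d. b i * s i) - (\<Sum>i<d. if i < k then s i else 0)"
    by (subst sum_subtractf[symmetric]) (auto simp: e_def algebra_simps intro!: sum.cong)
  ultimately show ?thesis using first[of s] by linarith
qed

lemma weighted_sum_le_top_sum: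
  fixes v :: "real list" and c :: "nat \<Rightarrow> real"
  assumes "k \<le> length v"
    and c: "\<And>j. j < length v \<Longrightarrow> 0 \<le> c j \<and> c j \<le> 1" and c_sum: "(\<Sum>j<length v. c j) = real k"
  shows "(\<Sum>j<length v. c j * v ! j) \<le> top_sum k v"
proof -
  let ?d = "length v"
  obtain f where f: "bij_betw f {..<?d} {..<?d}" "\<And>i. i < ?d \<Longrightarrow> rev (sort v) ! i = v ! f i"
    using rev_sort_as_permutation[of v] by blast
  have "(\<Sum>j<?d. c j * v ! j) = (\<Sum>i<?d. c (f i) * rev (sort v) ! i)"
    using sum.reindex_bij_betw[OF f(1), of "\<lambda>j. c j * v ! j"] f(2) by simp
  also have "\<dots> \<le> (\<Sum>i<k. rev (sort v) ! i)"
  proof (rule weighted_sum_le_sum_first[OF assms(1)])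
    show "\<And>i j. i \<le> j \<Longrightarrow> j < ?d \<Longrightarrow> rev (sort v) ! j \<le> rev (sort v) ! i"
      by (rule rev_sort_nth_antimono)
    show "\<And>i. i < ?d \<Longrightarrow> 0 \<le> c (f i) \<and> c (f i) \<le> 1"
      using c f(1) bij_betwE by blast
    show "(\<Sum>i<?d. c (f i)) = real k"
      using sum.reindex_bij_betw[OF f(1), of c] c_sum by simp
  qed
  also have "\<dots> = top_sum k v" using top_sum_eq_sum_nth[OF assms(1)] by simp
  finally show ?thesis .
qed

lemma top_sum_apply_doubly_stochastic_le:
  assumes ds: "doubly_stochastic d D" and len: "length v = d"
  shows "top_sum k (apply_matrix d D v) \<le> top_sum k v"
proof -
  let ?w = "apply_matrix d D v"
  obtain I where I: "I \<subseteq> {..<d}" "card I = min k d" "top_sum k ?w = (\<Sum>i\<in>I. ?w ! i)"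
    using top_sum_eq_sum_subset[of ?w k] by (auto simp: apply_matrix_def)
  define c where "c j = (\<Sum>i\<in>I. D i j)" for j
  have "top_sum k ?w = (\<Sum>i\<in>I. \<Sum>j<d. D i j * v ! j)"
    using I(1,3) by (auto simp: apply_matrix_def intro!: sum.cong)
  also have "\<dots> = (\<Sum>j<d. c j * v ! j)"
    unfolding c_def by (subst sum.swap) (simp add: sum_distrib_right)
  also have "\<dots> \<le> top_sum (min k d) v"
  proof (rule weighted_sum_le_top_sum[where v = v, unfolded len])
    show "min k d \<le> d" by simp
    fix j assume j: "j < d"
    have "c j \<le> (\<Sum>i<d. D i j)"
      unfolding c_def using ds I(1) j by (intro sum_mono2) (auto simp: doubly_stochastic_def)
    then show "0 \<le> c j \<and> c j \<le> 1"
      unfolding c_def using ds I(1) j by (auto simp: doubly_stochastic_def intro!: sum_nonneg)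
  next
    have "(\<Sum>j<d. c j) = (\<Sum>i\<in>I. \<Sum>j<d. D i j)" unfolding c_def by (rule sum.swap)
    also have "\<dots> = (\<Sum>i\<in>I. 1)"
      using ds I(1) by (intro sum.cong) (auto simp: doubly_stochastic_def)
    finally show "(\<Sum>j<d. c j) = real (min k d)" using I(2) by simp
  qed
  also have "\<dots> = top_sum k v" using top_sum_min_length[of k v] len by simp
  finally show ?thesis .
qed

lemma majorizes_apply_doubly_stochastic:
  assumes "doubly_stochastic d D" "length v = d"
  shows "majorizes v (apply_matrix d D v)"
  using top_sum_apply_doubly_stochastic_le[OF assms] assms(2)
  by (simp add: majorizes_def pad_def apply_matrix_def)

lemma prob_vec_apply_doubly_stochastic:
  assumes ds: "doubly_stochastic d D" and "prob_vec v" "length v = d"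
  shows "prob_vec (apply_matrix d D v)"
proof -
  have v: "\<And>j. j < d \<Longrightarrow> 0 \<le> v ! j" "(\<Sum>j<d. v ! j) = 1"
    using assms(2,3) by (auto simp: prob_vec_def sum_list_sum_nth atLeast0LessThan)
  have "(\<Sum>i<d. \<Sum>j<d. D i j * v ! j) = (\<Sum>j<d. (\<Sum>i<d. D i j) * v ! j)"
    by (subst sum.swap) (simp add: sum_distrib_right)
  also have "\<dots> = 1" using ds v(2) by (simp add: doubly_stochastic_def)
  finally show ?thesis
    using ds v(1)
    by (auto simp: prob_vec_def apply_matrix_def sum_list_map_upt_zero doubly_stochastic_def
        intro!: sum_nonneg)
qed

lemma length_pad: "length p \<le> d \<Longrightarrow> length (pad d p) = d"
  by (simp add: pad_def)

lemma nth_pad: "length p \<le> d \<Longrightarrow> i < d \<Longrightarrow> pad d p ! i = (if i < length p then p ! i else 0)"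
  by (simp add: pad_def nth_append)

lemma prob_vec_pad: "prob_vec p \<Longrightarrow> prob_vec (pad d p)"
  by (auto simp: prob_vec_def pad_def sum_list_replicate)

lemma schur_concave_pad_eq:
  assumes "schur_concave H" "prob_vec p" "length p \<le> d"
  shows "H (pad d p) = H p"
proof -
  have "majorizes p (pad d p)" "majorizes (pad d p) p"
    using assms(3) by (auto simp: majorizes_def length_pad Let_def pad_def)
  then show ?thesis
    using assms(1,2) prob_vec_pad[OF assms(2)] unfolding schur_concave_def by (meson order_antisym)
qed

lemma quasiconcave_entropy_mixture_ge:
  fixes m l :: nat
  assumes "quasiconcave_entropy H" "0 < m" "0 < l"
    and ps: "\<And>x z. x < m \<Longrightarrow> z < l \<Longrightarrow>
      prob_vec (ps x z) \<and> length (ps x z) = d \<and> 0 \<le> lam x z \<and> c \<le> H (ps x z)"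
    and lam_sum: "(\<Sum>x<m. \<Sum>z<l. lam x z) = 1"
  shows "c \<le> H (map (\<lambda>j. \<Sum>x<m. \<Sum>z<l. lam x z * ps x z ! j) [0..<d])"
proof -
  define ps' where "ps' i = ps (i div l) (i mod l)" for i
  define lam' where "lam' i = lam (i div l) (i mod l)" for i
  have idx: "i div l < m" "i mod l < l" if "i < m * l" for i
    using that \<open>0 < l\<close> by (auto simp: less_mult_imp_div_less)
  have "c \<le> Min ((\<lambda>i. H (ps' i)) ` {..<m * l})"
  proof (rule Min.boundedI)
    show "(\<lambda>i. H (ps' i)) ` {..<m * l} \<noteq> {}"
      using \<open>0 < m\<close> \<open>0 < l\<close> by (simp add: lessThan_empty_iff)
  qed (use ps idx in \<open>auto simp: ps'_def\<close>)
  also have "\<dots> \<le> H (map (\<lambda>j. \<Sum>i<m * l. lam' i * ps' i ! j) [0..<d])"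
    using assms(1) \<open>0 < m\<close> \<open>0 < l\<close> ps idx lam_sum
    unfolding quasiconcave_entropy_def
    by (simp add: ps'_def lam'_def sum_lessThan_mult_div_mod)
  also have "(\<lambda>j. \<Sum>i<m * l. lam' i * ps' i ! j) = (\<lambda>j. \<Sum>x<m. \<Sum>z<l. lam x z * ps x z ! j)"
    unfolding ps'_def lam'_def by (intro ext sum_lessThan_mult_div_mod[OF \<open>0 < l\<close>])
  finally show ?thesis .
qed

lemma length_column: "length (column n N x) = n"
  by (simp add: column_def)

lemma prob_vec_column:
  assumes "channel m n N" "x < m"
  shows "prob_vec (column n N x)"
  using assms by (auto simp: prob_vec_def column_def channel_def sum_list_map_upt_zero)

lemma chan_majorizes_column:
  assumes "x0 < m"
  shows "chan_majorizes m n N 1 n (vec_chan (column n N x0))"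
proof -
  let ?S = "\<lambda>x (z::nat) (x'::nat). of_bool (x = x0) :: real"
  let ?D = "\<lambda>(z::nat) (i::nat) j. of_bool (i = j) :: real"
  have "(\<Sum>x<m. \<Sum>z<1. \<Sum>y<n. ?D z y' y * pad_chan n N y x * ?S x z x') = N y' x0"
    if "y' < n" for y' x'
    using assms that by (simp add: pad_chan_def lessThan_Suc flip: sum_distrib_right)
  then have eq: "\<forall>y'<n. \<forall>x'<1. pad_chan n (vec_chan (column n N x0)) y' x' =
      (\<Sum>x<m. \<Sum>z<1. \<Sum>y<n. ?D z y' y * pad_chan n N y x * ?S x z x')"
    by (simp add: pad_chan_def vec_chan_def column_def)
  have S: "\<forall>x'<1. (\<forall>x<m. \<forall>z<1. 0 \<le> ?S x z x') \<and> (\<Sum>x<m. \<Sum>z<1. ?S x z x') = 1"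
    using assms by simp
  have D: "\<forall>z<1. doubly_stochastic n (?D z)"
    by (simp add: doubly_stochastic_def)
  show ?thesis
    unfolding chan_majorizes_def Let_def max.idem
    by (intro exI[of _ 1] exI[of _ ?S] exI[of _ ?D] conjI zero_less_one eq S D)
qed

lemma chan_majorizes_vec_imp_mixture:
  assumes "chan_majorizes m n N 1 (length q) (vec_chan q)"
  defines "d \<equiv> max n (length q)"
  obtains l :: nat and S :: "nat \<Rightarrow> nat \<Rightarrow> real" and D :: "nat \<Rightarrow> nat \<Rightarrow> nat \<Rightarrow> real"
  where "0 < l" "\<And>x z. x < m \<Longrightarrow> z < l \<Longrightarrow> 0 \<le> S x z" "(\<Sum>x<m. \<Sum>z<l. S x z) = 1"
    and "\<And>z. z < l \<Longrightarrow> doubly_stochastic d (D z)"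
    and "pad d q =
      map (\<lambda>j. \<Sum>x<m. \<Sum>z<l. S x z * apply_matrix d (D z) (pad d (column n N x)) ! j) [0..<d]"
proof -
  obtain l :: nat and S :: "nat \<Rightarrow> nat \<Rightarrow> nat \<Rightarrow> real" and D :: "nat \<Rightarrow> nat \<Rightarrow> nat \<Rightarrow> real"
    where "0 < l"
      and S: "\<forall>x'<1. (\<forall>x<m. \<forall>z<l. 0 \<le> S x z x') \<and> (\<Sum>x<m. \<Sum>z<l. S x z x') = 1"
      and D: "\<forall>z<l. doubly_stochastic d (D z)"
      and q_eq: "\<forall>j<d. \<forall>x'<1. pad_chan (length q) (vec_chan q) j x' =
        (\<Sum>x<m. \<Sum>z<l. \<Sum>y<d. D z j y * pad_chan n N y x * S x z x')"
    using assms(1) unfolding chan_majorizes_def Let_def d_def[symmetric]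
    by (elim exE conjE) (rule that; assumption)
  have nth_column: "pad d (column n N x) ! y = pad_chan n N y x" if "y < d" for x y
    using that by (simp add: d_def nth_pad length_column pad_chan_def column_def)
  have "pad d q ! j =
      (\<Sum>x<m. \<Sum>z<l. S x z 0 * apply_matrix d (D z) (pad d (column n N x)) ! j)" if j: "j < d" for j
  proof -
    have "pad d q ! j = pad_chan (length q) (vec_chan q) j 0"
      using j by (simp add: d_def pad_chan_def vec_chan_def nth_pad)
    also have "\<dots> = (\<Sum>x<m. \<Sum>z<l. \<Sum>y<d. D z j y * pad_chan n N y x * S x z 0)"
      using q_eq j by simp
    also have "\<dots> = (\<Sum>x<m. \<Sum>z<l. S x z 0 * apply_matrix d (D z) (pad d (column n N x)) ! j)"
      using j by (auto simp: apply_matrix_def sum_distrib_left nth_column mult_ac intro!: sum.cong)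
    finally show ?thesis .
  qed
  then have "pad d q =
      map (\<lambda>j. \<Sum>x<m. \<Sum>z<l. S x z 0 * apply_matrix d (D z) (pad d (column n N x)) ! j) [0..<d]"
    by (intro nth_equalityI) (simp_all add: d_def length_pad)
  moreover have "\<And>x z. x < m \<Longrightarrow> z < l \<Longrightarrow> 0 \<le> S x z 0" "(\<Sum>x<m. \<Sum>z<l. S x z 0) = 1"
    using S by simp_all
  ultimately show ?thesis
    using \<open>0 < l\<close> D by (intro that[of l "\<lambda>x z. S x z 0" D]) simp_all
qed

lemma entropy_mixture_apply_doubly_stochastic_ge:
  fixes m l :: nat
  assumes sc: "schur_concave H" and qc: "quasiconcave_entropy H" and "0 < m" "0 < l"
    and S: "\<And>x z. x < m \<Longrightarrow> z < l \<Longrightarrow> 0 \<le> S x z" and S_sum: "(\<Sum>x<m. \<Sum>z<l. S x z) = 1"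
    and D: "\<And>z. z < l \<Longrightarrow> doubly_stochastic d (D z)"
    and p: "\<And>x. x < m \<Longrightarrow> prob_vec (p x) \<and> length (p x) = d \<and> c \<le> H (p x)"
  shows "c \<le> H (map (\<lambda>j. \<Sum>x<m. \<Sum>z<l. S x z * apply_matrix d (D z) (p x) ! j) [0..<d])"
proof (rule quasiconcave_entropy_mixture_ge[OF qc \<open>0 < m\<close> \<open>0 < l\<close> _ S_sum])
  fix x z assume "x < m" "z < l"
  then have ds: "doubly_stochastic d (D z)" and p_x: "prob_vec (p x)" "length (p x) = d"
    using D p by auto
  have pv: "prob_vec (apply_matrix d (D z) (p x))"
    by (rule prob_vec_apply_doubly_stochastic[OF ds p_x])
  moreover have "H (p x) \<le> H (apply_matrix d (D z) (p x))"
    using sc p_x(1) pv majorizes_apply_doubly_stochastic[OF ds p_x(2)]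
    unfolding schur_concave_def by blast
  ultimately show "prob_vec (apply_matrix d (D z) (p x)) \<and> length (apply_matrix d (D z) (p x)) = d \<and>
      0 \<le> S x z \<and> c \<le> H (apply_matrix d (D z) (p x))"
    using p[OF \<open>x < m\<close>] S[OF \<open>x < m\<close> \<open>z < l\<close>] by (simp add: apply_matrix_def)
qed

lemma chan_majorizes_vec_entropy_ge:
  assumes H: "classical_entropy H" "quasiconcave_entropy H"
    and "0 < m" "channel m n N"
    and q: "prob_vec q" "chan_majorizes m n N 1 (length q) (vec_chan q)"
    and c: "\<And>x. x < m \<Longrightarrow> c \<le> H (column n N x)"
  shows "c \<le> H q"
proof -
  have sc: "schur_concave H" using H(1) by (simp add: classical_entropy_def)
  let ?d = "max n (length q)"
  have p: "prob_vec (pad ?d (column n N x)) \<and> length (pad ?d (column n N x)) = ?d \<and>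
      c \<le> H (pad ?d (column n N x))" if "x < m" for x
    using prob_vec_pad[OF prob_vec_column[OF assms(4) that]] c[OF that]
      schur_concave_pad_eq[OF sc prob_vec_column[OF assms(4) that], of ?d]
    by (simp add: length_pad length_column)
  show ?thesis
  proof (rule chan_majorizes_vec_imp_mixture[OF q(2)])
    fix l :: nat and S :: "nat \<Rightarrow> nat \<Rightarrow> real" and D :: "nat \<Rightarrow> nat \<Rightarrow> nat \<Rightarrow> real"
    assume "0 < l" and S: "\<And>x z. x < m \<Longrightarrow> z < l \<Longrightarrow> 0 \<le> S x z"
      and S_sum: "(\<Sum>x<m. \<Sum>z<l. S x z) = 1" and D: "\<And>z. z < l \<Longrightarrow> doubly_stochastic ?d (D z)"
      and mixture: "pad ?d q =
        map (\<lambda>j. \<Sum>x<m. \<Sum>z<l. S x z * apply_matrix ?d (D z) (pad ?d (column n N x)) ! j) [0..<?d]"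
    have "c \<le> H (pad ?d q)"
      unfolding mixture
      by (rule entropy_mixture_apply_doubly_stochastic_ge[OF sc H(2) \<open>0 < m\<close> \<open>0 < l\<close> S S_sum D p])
    then show "c \<le> H q"
      using schur_concave_pad_eq[OF sc q(1)] by simp
  qed
qed

theorem theorem19:
  fixes H :: "real list \<Rightarrow> real" and m n :: nat and N :: "nat \<Rightarrow> nat \<Rightarrow> real"
  assumes "classical_entropy H"
    and "quasiconcave_entropy H"
    and "0 < m"
    and "channel m n N"
  shows "max_ext H m n N = Min ((\<lambda>x. H (column n N x)) ` {..<m})"
proof -
  let ?C = "(\<lambda>x. H (column n N x)) ` {..<m}"
  let ?Q = "{H q | q. prob_vec q \<and> chan_majorizes m n N 1 (length q) (vec_chan q)}"
  have "?C \<noteq> {}" using assms(3) by (simp add: lessThan_empty_iff)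
  then have "Min ?C \<in> ?C" by (intro Min_in) auto
  then obtain x0 where "x0 < m" "Min ?C = H (column n N x0)" by auto
  then have "Min ?C \<in> ?Q"
    using prob_vec_column[OF assms(4)] chan_majorizes_column[of x0 m n N] by (auto simp: length_column)
  moreover have "Min ?C \<le> h" if "h \<in> ?Q" for h
    using that chan_majorizes_vec_entropy_ge[OF assms] by auto
  ultimately show ?thesis
    unfolding max_ext_def by (rule cInf_eq_minimum)
qed

end
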